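(* For every (nonempty) composition $\alpha$, the monomial quasi-symmetric function $M_\alpha$ is irreducible both in $\mathrm{QSym}$ and in $K=\mathbb Z[[x_1,x_2,\dots]]$ (power series of bounded degree).
   Context: For a composition $\alpha=(\alpha_1,\dots,\alpha_k)$ (positive integers), $M_\alpha=\sum_{i_1<\dots<i_k}x_{i_1}^{\alpha_1}\cdots x_{i_k}^{\alpha_k}$. $\mathrm{QSym}\subseteq K$ is the ring of quasi-symmetric functions (bounded-degree series whose coefficient of $x_{i_1}^{a_1}\cdots x_{i_k}^{a_k}$ depends only on $(a_1,\dots,a_k)$ for $i_1<\dots<i_k$). The units of $K$ and of $\mathrm{QSym}$ are $\pm1$. *)

theory Defs
  imports Main "HOL-Library.Poly_Mapping"
begin

text \<open>Monomials in x_1, x_2, ... are finitely supported exponent maps nat =>0 nat.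
 An element of K = Z[[x_1,x_2,...]] of bounded degree is a coefficient function
 on monomials whose support has bounded total degree.\<close>

type_synonym monom = "nat \<Rightarrow>\<^sub>0 nat"
type_synonym series = "monom \<Rightarrow> int"

definition mdeg :: "monom \<Rightarrow> nat" where
  "mdeg m = (\<Sum>i\<in>Poly_Mapping.keys m. Poly_Mapping.lookup m i)"

text \<open>Exponent sequence (a_1,...,a_k) of a monomial x_i1^a1 ... x_ik^ak with i1 < ... < ik.\<close>
definition compress :: "monom \<Rightarrow> nat list" where
  "compress m = map (Poly_Mapping.lookup m) (sorted_list_of_set (Poly_Mapping.keys m))"

definition K :: "series set" where
  "K = {f. \<exists>d. \<forall>m. f m \<noteq> 0 \<longrightarrow> mdeg m \<le> d}"

definition QSym :: "series set" where
  "QSym = {f \<in> K. \<forall>m m'. compress m = compress m' \<longrightarrow> f m = f m'}"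

definition kzero :: series where "kzero = (\<lambda>_. 0)"
definition kone :: series where "kone = (\<lambda>m. if m = 0 then 1 else 0)"

definition kmult :: "series \<Rightarrow> series \<Rightarrow> series" where
  "kmult f g = (\<lambda>m. \<Sum>a\<in>{a. \<forall>i. Poly_Mapping.lookup a i \<le> Poly_Mapping.lookup m i}. f a * g (m - a))"

definition unit_in :: "series set \<Rightarrow> series \<Rightarrow> bool" where
  "unit_in R u \<longleftrightarrow> u \<in> R \<and> (\<exists>v\<in>R. kmult u v = kone)"

definition irreducible_in :: "series set \<Rightarrow> series \<Rightarrow> bool" where
  "irreducible_in R p \<longleftrightarrow> p \<in> R \<and> p \<noteq> kzero \<and> \<not> unit_in R p \<and>
     (\<forall>a\<in>R. \<forall>b\<in>R. p = kmult a b \<longrightarrow> unit_in R a \<or> unit_in R b)"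

definition is_composition :: "nat list \<Rightarrow> bool" where
  "is_composition \<alpha> \<longleftrightarrow> \<alpha> \<noteq> [] \<and> (\<forall>a\<in>set \<alpha>. 0 < a)"

definition monomialQ :: "nat list \<Rightarrow> series" ("M") where
  "M \<alpha> = (\<lambda>m. if compress m = \<alpha> then 1 else 0)"

end

theory Submission
  imports Defs "HOL-Computational_Algebra.Polynomial" Complex_Main
begin

(*
  Induct on the composition, shifting the variables: let f g = M_(a,\<beta>) in x_s, x_(s+1), ...
  Multiplication in K has no zero divisors (a Kronecker substitution x_i := X^(B^i) of finitely
  many variables keeps any given coefficient intact in Z[X]). Hence the coefficients of the top
  powers x_s^d in f and x_s^e in g multiply to the coefficient of x_s^(d+e) in M_(a,\<beta>), so
  d + e = a and they factor M_\<beta> in x_(s+1), x_(s+2), ...; by induction one of them, say that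
  of f, is \<plusminus>1. If d = 0 then f = \<plusminus>1. Otherwise substitute X for x_s and complex numbers
  for finitely many other variables: f becomes a polynomial of degree at least d > 0. If \<beta> is
  nonempty, a suitable substitution turns M_(a,\<beta>) into a nonzero constant, a contradiction.
  If \<beta> = [], the coefficient of x_s^e in g is \<plusminus>1 as well, and comparing the substitutions
  (X, \<omega>, 1) and (0, X, 1) with \<omega>^a = -1 yields a double root of the squarefree X^a + 1.
*)

lemma mdeg_eq_sum:
  assumes "finite X" "Poly_Mapping.keys m \<subseteq> X"
  shows "mdeg m = (\<Sum>i\<in>X. Poly_Mapping.lookup m i)"
  unfolding mdeg_def
  by (rule sum.mono_neutral_left) (use assms in \<open>auto simp: in_keys_iff\<close>)

lemma mdeg_add: "mdeg (a + b) = mdeg a + mdeg b"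
proof -
  let ?X = "Poly_Mapping.keys a \<union> Poly_Mapping.keys b"
  have "mdeg (a + b) = (\<Sum>i\<in>?X. Poly_Mapping.lookup (a + b) i)"
    using keys_add[of a b] by (intro mdeg_eq_sum) auto
  also have "\<dots> = mdeg a + mdeg b"
    by (simp add: lookup_add sum.distrib mdeg_eq_sum[of ?X])
  finally show ?thesis .
qed

lemma mdeg_single [simp]: "mdeg (Poly_Mapping.single s r) = r"
  by (simp add: mdeg_def)

lemma lookup_le_mdeg: "Poly_Mapping.lookup m i \<le> mdeg m"
  unfolding mdeg_def
  by (cases "i \<in> Poly_Mapping.keys m") (auto simp: in_keys_iff intro: member_le_sum)

lemma mdeg_eq_sum_list_compress: "mdeg m = sum_list (compress m)"
  unfolding compress_def mdeg_def by (simp add: sum_list_distinct_conv_sum_set)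

lemma keys_add_monom:
  "Poly_Mapping.keys (a + b) = Poly_Mapping.keys a \<union> Poly_Mapping.keys (b :: monom)"
  by (auto simp: in_keys_iff lookup_add)

definition monoms_on :: "nat set \<Rightarrow> nat \<Rightarrow> monom set" where
  "monoms_on W D = {m. Poly_Mapping.keys m \<subseteq> W \<and> mdeg m \<le> D}"

lemma finite_monoms_on:
  assumes "finite W"
  shows "finite (monoms_on W D)"
proof -
  let ?F = "{h. \<forall>x. (x \<in> W \<longrightarrow> h x \<in> {..D}) \<and> (x \<notin> W \<longrightarrow> h x = (0::nat))}"
  have "Poly_Mapping.lookup m \<in> ?F" if m: "m \<in> monoms_on W D" for m
  proof -
    have "Poly_Mapping.lookup m x \<le> D" for x
      using m lookup_le_mdeg[of m x] by (simp add: monoms_on_def)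
    moreover have "Poly_Mapping.lookup m x = 0" if "x \<notin> W" for x
      using m that by (auto simp: monoms_on_def in_keys_iff)
    ultimately show ?thesis by simp
  qed
  then have "finite (Poly_Mapping.lookup ` monoms_on W D)"
    by (intro finite_subset[OF _ finite_set_of_finite_funs[of W "{..D}" 0]]) (use assms in auto)
  then show ?thesis
    by (rule finite_imageD) (simp add: inj_on_def)
qed

definition mdivisors :: "monom \<Rightarrow> monom set" where
  "mdivisors m = {a. \<forall>i. Poly_Mapping.lookup a i \<le> Poly_Mapping.lookup m i}"

lemma add_in_mdivisors: "a \<in> mdivisors (a + b)"
  by (simp add: mdivisors_def lookup_add)

lemma mdivisors_subset_monoms_on:
  assumes "a \<in> mdivisors m"
  shows "a \<in> monoms_on (Poly_Mapping.keys m) (mdeg m)"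
proof -
  have le: "Poly_Mapping.lookup a i \<le> Poly_Mapping.lookup m i" for i
    using assms by (simp add: mdivisors_def)
  then have keys: "Poly_Mapping.keys a \<subseteq> Poly_Mapping.keys m"
    by (metis in_keys_iff le_0_eq subsetI)
  have "mdeg a = (\<Sum>i\<in>Poly_Mapping.keys m. Poly_Mapping.lookup a i)"
    using keys by (intro mdeg_eq_sum) auto
  also have "\<dots> \<le> mdeg m"
    unfolding mdeg_def by (intro sum_mono le)
  finally show ?thesis using keys by (simp add: monoms_on_def)
qed

lemma finite_mdivisors: "finite (mdivisors m)"
  using mdivisors_subset_monoms_on finite_monoms_on
  by (metis finite_keys finite_subset subsetI)

lemma mdivisors_add_diff: "a \<in> mdivisors m \<Longrightarrow> a + (m - a) = m"
  by (intro poly_mapping_eqI) (simp add: mdivisors_def lookup_add lookup_minus)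

lemma mdivisors_diff: "a \<in> mdivisors m \<Longrightarrow> m - a \<in> mdivisors m"
  by (simp add: mdivisors_def lookup_minus)

lemma mdivisors_diff_diff: "a \<in> mdivisors m \<Longrightarrow> m - (m - a) = a"
  by (intro poly_mapping_eqI) (simp add: mdivisors_def lookup_minus)

lemma kmult_eq_sum_mdivisors: "kmult f g m = (\<Sum>a\<in>mdivisors m. f a * g (m - a))"
  unfolding kmult_def mdivisors_def ..

lemma kmult_commute: "kmult f g = kmult g f"
proof
  fix m
  show "kmult f g m = kmult g f m"
    unfolding kmult_eq_sum_mdivisors
    by (rule sum.reindex_bij_witness[where i="\<lambda>a. m - a" and j="\<lambda>a. m - a"])
       (auto simp: mdivisors_diff mdivisors_diff_diff mult.commute)
qed

lemma kmult_nonzero_obtain: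
  assumes "kmult f g m \<noteq> 0"
  obtains a where "a \<in> mdivisors m" "f a \<noteq> 0" "g (m - a) \<noteq> 0"
  using assms unfolding kmult_eq_sum_mdivisors
  by (metis (no_types, lifting) mult_zero_left mult_zero_right sum.neutral)

lemma kmult_kzero [simp]: "kmult kzero g = kzero" "kmult f kzero = kzero"
  unfolding kmult_def kzero_def by simp_all

lemma kmult_kone [simp]: "kmult kone f = f"
proof
  fix m
  have "kmult kone f m = (\<Sum>a\<in>mdivisors m. if a = 0 then f m else 0)"
    unfolding kmult_eq_sum_mdivisors kone_def by (intro sum.cong) auto
  also have "\<dots> = f m"
    using finite_mdivisors[of m] by (simp add: mdivisors_def)
  finally show "kmult kone f m = f m" .
qed

lemma kmult_uminus_left: "kmult (- f) g = - kmult f g"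
  by (rule ext) (simp add: kmult_def sum_negf)

definition deg_le :: "series \<Rightarrow> nat \<Rightarrow> bool" where
  "deg_le f D \<longleftrightarrow> (\<forall>m. f m \<noteq> 0 \<longrightarrow> mdeg m \<le> D)"

lemma K_iff_deg_le: "f \<in> K \<longleftrightarrow> (\<exists>D. deg_le f D)"
  by (simp add: K_def deg_le_def)

lemma deg_le_kmult:
  assumes "deg_le f D1" "deg_le g D2"
  shows "deg_le (kmult f g) (D1 + D2)"
  unfolding deg_le_def
proof (intro allI impI)
  fix m assume "kmult f g m \<noteq> 0"
  then obtain a where a: "a \<in> mdivisors m" "f a \<noteq> 0" "g (m - a) \<noteq> 0"
    by (rule kmult_nonzero_obtain)
  then have "mdeg m = mdeg a + mdeg (m - a)"
    by (simp add: mdivisors_add_diff flip: mdeg_add)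
  with a assms show "mdeg m \<le> D1 + D2"
    unfolding deg_le_def by (metis add_le_mono)
qed

section \<open>Substituting values for finitely many variables\<close>

definition mono_eval :: "nat set \<Rightarrow> (nat \<Rightarrow> 'a::comm_ring_1) \<Rightarrow> monom \<Rightarrow> 'a" where
  "mono_eval V v m = (\<Prod>i\<in>V. v i ^ Poly_Mapping.lookup m i)"

text \<open>Substitutes \<open>v i\<close> for \<open>x\<^sub>i\<close> when \<open>i \<in> V\<close>, and \<open>0\<close> for all other variables.\<close>

definition eval_vars :: "nat set \<Rightarrow> (nat \<Rightarrow> 'a::comm_ring_1) \<Rightarrow> series \<Rightarrow> 'a" where
  "eval_vars V v f =
     (\<Sum>m | Poly_Mapping.keys m \<subseteq> V \<and> f m \<noteq> 0. of_int (f m) * mono_eval V v m)"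

lemma mono_eval_add: "mono_eval V v (a + b) = mono_eval V v a * mono_eval V v b"
  unfolding mono_eval_def by (simp add: lookup_add power_add prod.distrib)

lemma mono_eval_insert_zero:
  "finite W \<Longrightarrow> j \<notin> W \<Longrightarrow> Poly_Mapping.lookup m j = 0 \<Longrightarrow> mono_eval (insert j W) v m = mono_eval W v m"
  by (simp add: mono_eval_def)

lemma mono_eval_single:
  assumes "finite V" "j \<in> V"
  shows "mono_eval V v (Poly_Mapping.single j b) = v j ^ b"
proof -
  have "mono_eval V v (Poly_Mapping.single j b) =
        v j ^ b * (\<Prod>i\<in>V - {j}. v i ^ Poly_Mapping.lookup (Poly_Mapping.single j b) i)"
    using assms by (simp add: mono_eval_def prod.remove)
  also have "(\<Prod>i\<in>V - {j}. v i ^ Poly_Mapping.lookup (Poly_Mapping.single j b) i) = 1"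
    by (intro prod.neutral) (simp add: lookup_single)
  finally show ?thesis
    by simp
qed

lemma eval_vars_eq_sum_monoms_on:
  assumes "finite V" "deg_le f D"
  shows "eval_vars V v f = (\<Sum>m\<in>monoms_on V D. of_int (f m) * mono_eval V v m)"
  unfolding eval_vars_def
  by (rule sum.mono_neutral_left)
     (use assms finite_monoms_on[OF assms(1), of D] in \<open>auto simp: monoms_on_def deg_le_def\<close>)

lemma sum_convolution_monoms_on:
  assumes V: "finite V" and F: "\<And>a b. F a b \<noteq> 0 \<Longrightarrow> mdeg a \<le> D1 \<and> mdeg b \<le> D2"
  shows "(\<Sum>m\<in>monoms_on V (D1 + D2). \<Sum>a\<in>mdivisors m. F a (m - a)) =
         (\<Sum>a\<in>monoms_on V D1. \<Sum>b\<in>monoms_on V D2. F a b)"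
proof -
  let ?P = "{(a, b). a + b \<in> monoms_on V (D1 + D2)}"
  have "(\<Sum>m\<in>monoms_on V (D1 + D2). \<Sum>a\<in>mdivisors m. F a (m - a)) =
        (\<Sum>(m, a)\<in>Sigma (monoms_on V (D1 + D2)) mdivisors. F a (m - a))"
    by (rule sum.Sigma) (auto simp: finite_monoms_on V finite_mdivisors)
  also have "\<dots> = (\<Sum>(a, b)\<in>?P. F a b)"
    by (rule sum.reindex_bij_witness[where i="\<lambda>(a, b). (a + b, a)" and j="\<lambda>(m, a). (a, m - a)"])
       (auto simp: mdivisors_add_diff add_in_mdivisors)
  also have "\<dots> = (\<Sum>(a, b)\<in>monoms_on V D1 \<times> monoms_on V D2. F a b)"
  proof (rule sum.mono_neutral_right)
    show "finite ?P"
      by (rule finite_subset[of _ "monoms_on V (D1 + D2) \<times> monoms_on V (D1 + D2)"])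
         (use finite_monoms_on[OF V] in \<open>auto simp: monoms_on_def keys_add_monom mdeg_add\<close>)
    show "monoms_on V D1 \<times> monoms_on V D2 \<subseteq> ?P"
      by (auto simp: monoms_on_def keys_add_monom mdeg_add)
    show "\<forall>p\<in>?P - monoms_on V D1 \<times> monoms_on V D2. (case p of (a, b) \<Rightarrow> F a b) = 0"
      using F by (fastforce simp: monoms_on_def keys_add_monom)
  qed
  also have "\<dots> = (\<Sum>a\<in>monoms_on V D1. \<Sum>b\<in>monoms_on V D2. F a b)"
    by (rule sum.cartesian_product[symmetric])
  finally show ?thesis .
qed

lemma eval_vars_kmult:
  assumes V: "finite V" and "f \<in> K" "g \<in> K"
  shows "eval_vars V v (kmult f g) = eval_vars V v f * eval_vars V v g"
proof -
  obtain D1 D2 where f: "deg_le f D1" and g: "deg_le g D2"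
    using assms K_iff_deg_le by blast
  define F where "F a b = of_int (f a) * mono_eval V v a * (of_int (g b) * mono_eval V v b)" for a b
  have convolution: "of_int (kmult f g m) * mono_eval V v m = (\<Sum>a\<in>mdivisors m. F a (m - a))" for m
  proof -
    have split: "mono_eval V v m = mono_eval V v a * mono_eval V v (m - a)"
        if "a \<in> mdivisors m" for a
      by (metis that mdivisors_add_diff mono_eval_add)
    show ?thesis
      unfolding kmult_eq_sum_mdivisors F_def of_int_sum sum_distrib_right
      by (intro sum.cong refl) (simp add: split mult_ac)
  qed
  have support: "mdeg a \<le> D1 \<and> mdeg b \<le> D2" if "F a b \<noteq> 0" for a b
  proof -
    from that have "f a \<noteq> 0" "g b \<noteq> 0"
      by (auto simp: F_def)
    with f g show ?thesis
      by (simp add: deg_le_def)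
  qed
  have "eval_vars V v (kmult f g) = (\<Sum>m\<in>monoms_on V (D1 + D2). \<Sum>a\<in>mdivisors m. F a (m - a))"
    by (simp add: eval_vars_eq_sum_monoms_on[OF V deg_le_kmult[OF f g]] convolution)
  also have "\<dots> = (\<Sum>a\<in>monoms_on V D1. \<Sum>b\<in>monoms_on V D2. F a b)"
    using V support by (rule sum_convolution_monoms_on)
  also have "\<dots> = eval_vars V v f * eval_vars V v g"
    by (simp add: eval_vars_eq_sum_monoms_on[OF V f] eval_vars_eq_sum_monoms_on[OF V g]
        sum_product F_def)
  finally show ?thesis .
qed

lemma eval_vars_kzero [simp]: "eval_vars V v kzero = 0"
  by (simp add: eval_vars_def kzero_def)

lemma poly_eval_vars: "poly (eval_vars V v f) z = eval_vars V (\<lambda>i. poly (v i) z) f"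
  unfolding eval_vars_def mono_eval_def by (simp add: poly_sum poly_prod)

section \<open>Kronecker substitution\<close>

definition kron_code :: "nat \<Rightarrow> nat \<Rightarrow> monom \<Rightarrow> nat" where
  "kron_code B N m = (\<Sum>i<N. Poly_Mapping.lookup m i * B ^ i)"

lemma base_expansion_less:
  assumes "\<forall>i<N. x i < (B::nat)"
  shows "(\<Sum>i<N. x i * B ^ i) < B ^ N"
  using assms
proof (induction N)
  case (Suc N)
  have "(\<Sum>i<Suc N. x i * B ^ i) < B ^ N + x N * B ^ N"
    using Suc by simp
  also have "\<dots> = Suc (x N) * B ^ N"
    by simp
  also have "\<dots> \<le> B * B ^ N"
    using Suc.prems by (intro mult_right_mono) auto
  finally show ?case by simp
qed simp

lemma base_expansion_inj:
  assumes "\<forall>i<N. x i < (B::nat)" "\<forall>i<N. y i < B"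
    and "(\<Sum>i<N. x i * B ^ i) = (\<Sum>i<N. y i * B ^ i)"
  shows "\<forall>i<N. x i = y i"
  using assms
proof (induction N)
  case (Suc N)
  let ?X = "\<Sum>i<N. x i * B ^ i" and ?Y = "\<Sum>i<N. y i * B ^ i"
  have less: "?X < B ^ N" "?Y < B ^ N"
    using Suc.prems by (auto intro: base_expansion_less)
  have eq: "?X + x N * B ^ N = ?Y + y N * B ^ N"
    using Suc.prems(3) by simp
  have "(?X + x N * B ^ N) div B ^ N = x N" "(?Y + y N * B ^ N) div B ^ N = y N"
    using less Suc.prems(1) by auto
  with eq have "x N = y N" "?X = ?Y"
    by simp_all
  with Suc show ?case
    by (auto simp: less_Suc_eq)
qed simp

lemma kron_code_inj:
  assumes "m \<in> monoms_on {..<N} D" "m' \<in> monoms_on {..<N} D" "D < B"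
    and "kron_code B N m = kron_code B N m'"
  shows "m = m'"
proof (rule poly_mapping_eqI)
  fix k
  have "Poly_Mapping.lookup n i < B" if "n \<in> monoms_on {..<N} D" for n i
    using that assms(3) lookup_le_mdeg[of n i] by (simp add: monoms_on_def)
  then have "\<forall>i<N. Poly_Mapping.lookup m i < B" "\<forall>i<N. Poly_Mapping.lookup m' i < B"
    using assms(1,2) by blast+
  then have "\<forall>i<N. Poly_Mapping.lookup m i = Poly_Mapping.lookup m' i"
    using assms(4) unfolding kron_code_def by (rule base_expansion_inj)
  moreover have "Poly_Mapping.lookup m k = 0 \<and> Poly_Mapping.lookup m' k = 0" if "\<not> k < N"
    using assms(1,2) that by (auto simp: monoms_on_def in_keys_iff)
  ultimately show "Poly_Mapping.lookup m k = Poly_Mapping.lookup m' k"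
    by (cases "k < N") auto
qed

lemma mono_eval_kron:
  "mono_eval {..<N} (\<lambda>i. monom 1 (B ^ i)) m = monom 1 (kron_code B N m)"
  unfolding mono_eval_def kron_code_def
  by (induction N) (simp_all add: monom_power mult_monom mult.commute add.commute)

lemma coeff_eval_vars_kron:
  assumes "deg_le f D" "D < B" "\<mu> \<in> monoms_on {..<N} D"
  shows "coeff (eval_vars {..<N} (\<lambda>i. monom (1::int) (B ^ i)) f) (kron_code B N \<mu>) = f \<mu>"
proof -
  have "coeff (eval_vars {..<N} (\<lambda>i. monom (1::int) (B ^ i)) f) (kron_code B N \<mu>) =
        (\<Sum>m\<in>monoms_on {..<N} D. if m = \<mu> then f \<mu> else 0)"
    unfolding eval_vars_eq_sum_monoms_on[OF finite_lessThan assms(1)] mono_eval_kron coeff_sum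
    using kron_code_inj[OF _ assms(3,2)]
    by (intro sum.cong refl) (auto simp: of_int_monom mult_monom)
  then show ?thesis
    using assms(3) finite_monoms_on[of "{..<N}" D] by simp
qed

lemma kmult_no_zero_divisors:
  assumes "f \<in> K" "g \<in> K" "f \<noteq> kzero" "g \<noteq> kzero"
  shows "kmult f g \<noteq> kzero"
proof
  assume fg: "kmult f g = kzero"
  obtain D1 D2 where f: "deg_le f D1" and g: "deg_le g D2"
    using assms K_iff_deg_le by blast
  obtain \<mu> \<nu> where \<mu>: "f \<mu> \<noteq> 0" and \<nu>: "g \<nu> \<noteq> 0"
    using assms(3,4) by (auto simp: kzero_def fun_eq_iff)
  obtain N where N: "Poly_Mapping.keys \<mu> \<union> Poly_Mapping.keys \<nu> \<subseteq> {..<N}"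
    using finite_nat_bounded[of "Poly_Mapping.keys \<mu> \<union> Poly_Mapping.keys \<nu>"] by auto
  define B where "B = Suc (D1 + D2)"
  define kron :: "series \<Rightarrow> int poly" where "kron = eval_vars {..<N} (\<lambda>i. monom 1 (B ^ i))"
  have "\<mu> \<in> monoms_on {..<N} D1" "\<nu> \<in> monoms_on {..<N} D2"
    using \<mu> \<nu> N f g by (auto simp: monoms_on_def deg_le_def)
  then have "coeff (kron f) (kron_code B N \<mu>) = f \<mu>" "coeff (kron g) (kron_code B N \<nu>) = g \<nu>"
    unfolding kron_def by (auto intro!: coeff_eval_vars_kron f g simp: B_def)
  then have "kron f \<noteq> 0" "kron g \<noteq> 0"
    using \<mu> \<nu> by auto
  moreover have "kron f * kron g = 0"
    using eval_vars_kmult[OF finite_lessThan assms(1,2), of N "\<lambda>i. monom (1::int) (B ^ i)"] fg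
    by (simp add: kron_def)
  ultimately show False
    by auto
qed

section \<open>Coefficients of the powers of one variable\<close>

text \<open>\<open>slice s r f\<close> is the coefficient of \<open>x\<^sub>s\<^sup>r\<close>
  in \<open>f\<close>, viewed as a series in the other variables.\<close>

definition slice :: "nat \<Rightarrow> nat \<Rightarrow> series \<Rightarrow> series" where
  "slice s r f = (\<lambda>m. if Poly_Mapping.lookup m s = 0 then f (m + Poly_Mapping.single s r) else 0)"

definition var_deg_le :: "nat \<Rightarrow> series \<Rightarrow> nat \<Rightarrow> bool" where
  "var_deg_le s f d \<longleftrightarrow> (\<forall>m. f m \<noteq> 0 \<longrightarrow> Poly_Mapping.lookup m s \<le> d)"

lemma deg_le_slice:
  assumes "deg_le f D"
  shows "deg_le (slice s r f) D"
  unfolding deg_le_def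
proof (intro allI impI)
  fix m
  assume "slice s r f m \<noteq> 0"
  then have "f (m + Poly_Mapping.single s r) \<noteq> 0"
    by (simp add: slice_def split: if_splits)
  with assms have "mdeg (m + Poly_Mapping.single s r) \<le> D"
    by (simp add: deg_le_def)
  then have "mdeg m + r \<le> D"
    by (simp add: mdeg_add)
  then show "mdeg m \<le> D"
    by simp
qed

lemma slice_in_K: "f \<in> K \<Longrightarrow> slice s r f \<in> K"
  using deg_le_slice K_iff_deg_le by blast

lemma slice_remove_var:
  "slice s (Poly_Mapping.lookup m s) f (m - Poly_Mapping.single s (Poly_Mapping.lookup m s)) = f m"
proof -
  have "m - Poly_Mapping.single s (Poly_Mapping.lookup m s)
      + Poly_Mapping.single s (Poly_Mapping.lookup m s) = m"
    by (rule poly_mapping_eqI) (simp add: lookup_add lookup_minus lookup_single when_def)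
  then show ?thesis
    by (simp add: slice_def lookup_minus)
qed

lemma slice_zero_eq:
  assumes "var_deg_le s f 0"
  shows "slice s 0 f = f"
  by (rule ext) (use assms in \<open>auto simp: slice_def var_deg_le_def\<close>)

lemma var_deg_le_kmult:
  assumes "var_deg_le s f d" "var_deg_le s g e"
  shows "var_deg_le s (kmult f g) (d + e)"
  unfolding var_deg_le_def
proof (intro allI impI)
  fix m assume "kmult f g m \<noteq> 0"
  then obtain a where a: "a \<in> mdivisors m" "f a \<noteq> 0" "g (m - a) \<noteq> 0"
    by (rule kmult_nonzero_obtain)
  then have "Poly_Mapping.lookup m s = Poly_Mapping.lookup a s + Poly_Mapping.lookup (m - a) s"
    by (simp add: mdivisors_def lookup_minus)
  with a assms show "Poly_Mapping.lookup m s \<le> d + e"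
    unfolding var_deg_le_def by (metis add_le_mono)
qed

lemma slice_nonzero_imp_le:
  assumes "var_deg_le s f d" "slice s r f \<noteq> kzero"
  shows "r \<le> d"
proof -
  obtain m where "f (m + Poly_Mapping.single s r) \<noteq> 0" "Poly_Mapping.lookup m s = 0"
    using assms(2) by (auto simp: slice_def kzero_def fun_eq_iff split: if_splits)
  with assms(1) show ?thesis
    unfolding var_deg_le_def by (metis add_0 lookup_add lookup_single_eq)
qed

lemma exists_top_slice:
  assumes "f \<in> K" "f \<noteq> kzero"
  obtains d where "var_deg_le s f d" "slice s d f \<noteq> kzero"
proof -
  obtain D where D: "deg_le f D"
    using assms(1) K_iff_deg_le by blast
  define E where "E = (\<lambda>m. Poly_Mapping.lookup m s) ` {m. f m \<noteq> 0}"
  have "Poly_Mapping.lookup m s \<le> D" if "f m \<noteq> 0" for m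
    using D that lookup_le_mdeg[of m s] unfolding deg_le_def by (meson order_trans)
  then have "finite E"
    by (intro finite_subset[of E "{..D}"]) (auto simp: E_def)
  moreover have "E \<noteq> {}"
    using assms(2) by (auto simp: E_def kzero_def fun_eq_iff)
  moreover define d where "d = Max E"
  ultimately have "d \<in> E" "\<forall>r\<in>E. r \<le> d"
    by auto
  then obtain m where m: "f m \<noteq> 0" "Poly_Mapping.lookup m s = d"
    unfolding E_def by blast
  have "var_deg_le s f d"
    using \<open>\<forall>r\<in>E. r \<le> d\<close> by (auto simp: var_deg_le_def E_def)
  moreover have "slice s d f (m - Poly_Mapping.single s d) \<noteq> 0"
    using m slice_remove_var[of s m f] by simp
  then have "slice s d f \<noteq> kzero"
    by (metis kzero_def)
  ultimately show ?thesis
    using that by blast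
qed

lemma top_mdivisors_eq:
  assumes "Poly_Mapping.lookup m s = 0"
  shows "{a \<in> mdivisors (m + Poly_Mapping.single s (d + e)). Poly_Mapping.lookup a s = d} =
         (\<lambda>a. a + Poly_Mapping.single s d) ` mdivisors m"
proof (intro equalityI subsetI)
  fix a
  assume a: "a \<in> {a \<in> mdivisors (m + Poly_Mapping.single s (d + e)). Poly_Mapping.lookup a s = d}"
  have "Poly_Mapping.lookup (a - Poly_Mapping.single s d) i \<le> Poly_Mapping.lookup m i" for i
    using a assms by (cases "i = s")
      (auto simp: mdivisors_def lookup_add lookup_minus lookup_single dest: spec[of _ i])
  then have "a - Poly_Mapping.single s d \<in> mdivisors m"
    by (simp add: mdivisors_def)
  moreover have "a = a - Poly_Mapping.single s d + Poly_Mapping.single s d"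
    using a by (intro poly_mapping_eqI) (auto simp: lookup_add lookup_minus lookup_single when_def)
  ultimately show "a \<in> (\<lambda>a. a + Poly_Mapping.single s d) ` mdivisors m"
    by blast
next
  fix a
  assume "a \<in> (\<lambda>a. a + Poly_Mapping.single s d) ` mdivisors m"
  then obtain b where b: "b \<in> mdivisors m" "a = b + Poly_Mapping.single s d"
    by blast
  then have "Poly_Mapping.lookup b s = 0"
    using assms by (auto simp: mdivisors_def dest: spec[of _ s])
  with b show "a \<in> {a \<in> mdivisors (m + Poly_Mapping.single s (d + e)). Poly_Mapping.lookup a s = d}"
    by (auto simp: mdivisors_def lookup_add lookup_single when_def intro: add_mono)
qed

lemma kmult_top_coeff:
  assumes f: "var_deg_le s f d" and g: "var_deg_le s g e" and m: "Poly_Mapping.lookup m s = 0"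
  shows "kmult f g (m + Poly_Mapping.single s (d + e)) = kmult (slice s d f) (slice s e g) m"
proof -
  define n where "n = m + Poly_Mapping.single s (d + e)"
  define T where "T = {a \<in> mdivisors n. Poly_Mapping.lookup a s = d}"
  have zero: "f a * g (n - a) = 0" if "a \<in> mdivisors n - T" for a
  proof -
    have "Poly_Mapping.lookup a s \<noteq> d" "Poly_Mapping.lookup a s \<le> d + e"
      using that m by (auto simp: T_def n_def mdivisors_def lookup_add dest: spec[of _ s])
    then have "d < Poly_Mapping.lookup a s \<or> e < Poly_Mapping.lookup (n - a) s"
      using m by (auto simp: n_def lookup_minus lookup_add)
    then show ?thesis
      using f g by (auto simp: var_deg_le_def)
  qed
  have shift: "n - (a + Poly_Mapping.single s d) = (m - a) + Poly_Mapping.single s e"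
    and a_free: "Poly_Mapping.lookup a s = 0" if "a \<in> mdivisors m" for a
    using that m by (auto simp: n_def mdivisors_def lookup_add lookup_minus lookup_single when_def
        intro!: poly_mapping_eqI dest: spec[of _ s])
  have "kmult f g n = (\<Sum>a\<in>T. f a * g (n - a))"
    unfolding kmult_eq_sum_mdivisors using zero
    by (intro sum.mono_neutral_right) (auto simp: T_def finite_mdivisors)
  also have "\<dots> = (\<Sum>a\<in>mdivisors m. f (a + Poly_Mapping.single s d)
        * g (n - (a + Poly_Mapping.single s d)))"
    unfolding T_def n_def top_mdivisors_eq[OF m] by (subst sum.reindex) (auto simp: inj_on_def)
  also have "\<dots> = kmult (slice s d f) (slice s e g) m"
    using m
    by (auto simp: kmult_eq_sum_mdivisors slice_def lookup_minus shift a_free intro!: sum.cong)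
  finally show ?thesis
    by (simp add: n_def)
qed

lemma slice_kmult_top:
  assumes "var_deg_le s f d" "var_deg_le s g e"
  shows "slice s (d + e) (kmult f g) = kmult (slice s d f) (slice s e g)"
proof
  fix m
  show "slice s (d + e) (kmult f g) m = kmult (slice s d f) (slice s e g) m"
  proof (cases "Poly_Mapping.lookup m s = 0")
    case True
    then show ?thesis
      by (simp add: slice_def kmult_top_coeff[OF assms])
  next
    case False
    have "kmult (slice s d f) (slice s e g) m = 0"
      unfolding kmult_eq_sum_mdivisors
      by (rule sum.neutral) (use False in \<open>auto simp: slice_def lookup_minus\<close>)
    then show ?thesis
      using False by (simp add: slice_def)
  qed
qed

definition pm_one :: "series \<Rightarrow> bool" where
  "pm_one f \<longleftrightarrow> f = kone \<or> f = - kone"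

lemma pm_one_at_zero: "pm_one h \<Longrightarrow> h 0 = 1 \<or> h 0 = -1"
  by (auto simp: pm_one_def kone_def)

lemma pm_one_at_nonzero: "pm_one h \<Longrightarrow> m \<noteq> 0 \<Longrightarrow> h m = 0"
  by (auto simp: pm_one_def kone_def)

lemma kmult_eq_kone_imp_const:
  assumes "f \<in> K" "g \<in> K" "kmult f g = kone" "m \<noteq> 0"
  shows "f m = 0"
proof (rule ccontr)
  assume "f m \<noteq> 0"
  from \<open>m \<noteq> 0\<close> obtain s where s: "Poly_Mapping.lookup m s \<noteq> 0"
    by (metis lookup_zero poly_mapping_eqI)
  have "kone \<noteq> kzero"
    by (auto simp: kone_def kzero_def fun_eq_iff)
  then have "f \<noteq> kzero" "g \<noteq> kzero"
    using assms(3) by (metis kmult_kzero(1), metis kmult_kzero(2))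
  obtain d where d: "var_deg_le s f d" "slice s d f \<noteq> kzero"
    by (rule exists_top_slice[OF assms(1) \<open>f \<noteq> kzero\<close>])
  obtain e where e: "var_deg_le s g e" "slice s e g \<noteq> kzero"
    by (rule exists_top_slice[OF assms(2) \<open>g \<noteq> kzero\<close>])
  \<comment> \<open>the top \<open>x\<^sub>s\<close>-degrees of \<open>f\<close> and \<open>g\<close> add up to that of \<open>kone\<close>, which is \<open>0\<close>\<close>
  have "slice s (d + e) kone \<noteq> kzero"
    using slice_kmult_top[OF d(1) e(1)] assms(3)
      kmult_no_zero_divisors[OF slice_in_K[OF assms(1)] slice_in_K[OF assms(2)] d(2) e(2)]
    by simp
  moreover have "var_deg_le s kone 0"
    by (simp add: var_deg_le_def kone_def)
  ultimately have "d = 0"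
    using slice_nonzero_imp_le by fastforce
  with d(1) have "var_deg_le s f 0"
    by simp
  with \<open>f m \<noteq> 0\<close> s show False
    by (auto simp: var_deg_le_def)
qed

lemma kmult_eq_kone_imp_pm_one:
  assumes "f \<in> K" "g \<in> K" "kmult f g = kone"
  shows "pm_one f"
proof -
  have "mdivisors 0 = {0}"
    by (auto simp: mdivisors_def intro!: poly_mapping_eqI)
  then have "kmult f g 0 = f 0 * g 0"
    by (simp add: kmult_eq_sum_mdivisors)
  then have "f 0 * g 0 = 1"
    using assms(3) by (simp add: kone_def)
  then have "f 0 = 1 \<or> f 0 = -1"
    by (auto simp: zmult_eq_1_iff)
  then show ?thesis
    using kmult_eq_kone_imp_const[OF assms] by (auto simp: pm_one_def kone_def fun_eq_iff)
qed

lemma unit_in_K_imp_pm_one: "unit_in K f \<Longrightarrow> pm_one f"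
  unfolding unit_in_def using kmult_eq_kone_imp_pm_one by blast

lemma pm_one_imp_unit_in:
  assumes "pm_one f" "f \<in> R"
  shows "unit_in R f"
proof -
  have "kmult f f = kone"
    using assms(1) by (auto simp: pm_one_def kmult_uminus_left)
  with assms(2) show ?thesis
    by (auto simp: unit_in_def)
qed

section \<open>Monomial quasi-symmetric functions in a tail of the variables\<close>

lemma compress_eq_Nil_iff: "compress m = [] \<longleftrightarrow> m = 0"
  by (simp add: compress_def)

lemma compress_zero [simp]: "compress 0 = []"
  by (simp add: compress_def)

lemma keys_single_add:
  "c > 0 \<Longrightarrow> Poly_Mapping.keys (Poly_Mapping.single j c + (m :: monom))
      = insert j (Poly_Mapping.keys m)"
  by (simp add: keys_add_monom)

lemma compress_single_add:
  assumes "\<forall>i\<in>Poly_Mapping.keys m. j < i" "c > 0"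
  shows "compress (Poly_Mapping.single j c + m) = c # compress m"
proof -
  have j: "Poly_Mapping.lookup m j = 0"
    using assms(1) by (auto simp: in_keys_iff)
  have "Min (insert j (Poly_Mapping.keys m)) = j"
    using assms(1) by (intro Min_eqI) (auto intro: less_imp_le)
  moreover have "j \<notin> Poly_Mapping.keys m"
    using assms(1) by blast
  ultimately have "sorted_list_of_set (insert j (Poly_Mapping.keys m))
      = j # sorted_list_of_set (Poly_Mapping.keys m)"
    using sorted_list_of_set_nonempty[of "insert j (Poly_Mapping.keys m)"] by simp
  moreover have "Poly_Mapping.lookup (Poly_Mapping.single j c + m) i = Poly_Mapping.lookup m i"
    if "i \<in> Poly_Mapping.keys m" for i
    using assms(1) that by (auto simp: lookup_add lookup_single)
  ultimately show ?thesis
    using assms(2) j by (simp add: compress_def keys_single_add lookup_add)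
qed

lemma single_lookup_add_diff:
  "Poly_Mapping.single j (Poly_Mapping.lookup m j)
    + (m - Poly_Mapping.single j (Poly_Mapping.lookup m j)) = (m :: monom)"
  by (rule poly_mapping_eqI) (simp add: lookup_add lookup_minus lookup_single when_def)

lemma keys_diff_single_lookup:
  "Poly_Mapping.keys ((m :: monom) - Poly_Mapping.single j (Poly_Mapping.lookup m j))
    = Poly_Mapping.keys m - {j}"
  by (auto simp: in_keys_iff lookup_minus lookup_single when_def split: if_splits)

lemma compress_eq_Cons_first:
  assumes "j \<in> Poly_Mapping.keys m" "Poly_Mapping.keys m \<subseteq> {j..}"
  shows "compress m = Poly_Mapping.lookup m j
      # compress (m - Poly_Mapping.single j (Poly_Mapping.lookup m j))"
proof -
  let ?m' = "m - Poly_Mapping.single j (Poly_Mapping.lookup m j)"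
  have "\<forall>i\<in>Poly_Mapping.keys ?m'. j < i"
  proof
    fix i
    assume "i \<in> Poly_Mapping.keys ?m'"
    then have "i \<in> Poly_Mapping.keys m" "i \<noteq> j"
      unfolding keys_diff_single_lookup by auto
    with assms(2) show "j < i"
      by force
  qed
  moreover have "Poly_Mapping.lookup m j > 0"
    using assms(1) by (simp add: in_keys_iff)
  ultimately have "compress (Poly_Mapping.single j (Poly_Mapping.lookup m j) + ?m') =
                   Poly_Mapping.lookup m j # compress ?m'"
    by (rule compress_single_add)
  then show ?thesis
    by (simp add: single_lookup_add_diff)
qed

definition M_from :: "nat \<Rightarrow> nat list \<Rightarrow> series" where
  "M_from j \<beta> = (\<lambda>m. if compress m = \<beta> \<and> Poly_Mapping.keys m \<subseteq> {j..} then 1 else 0)"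

lemma M_eq_M_from_0: "M \<alpha> = M_from 0 \<alpha>"
  by (simp add: monomialQ_def M_from_def)

lemma M_from_Nil: "M_from j [] = kone"
  by (auto simp: M_from_def kone_def compress_eq_Nil_iff)

lemma deg_le_M_from: "deg_le (M_from j \<beta>) (sum_list \<beta>)"
  by (simp add: deg_le_def M_from_def mdeg_eq_sum_list_compress)

lemma M_from_in_K: "M_from j \<beta> \<in> K"
  using deg_le_M_from K_iff_deg_le by blast

lemma var_deg_le_M_from_Cons: "var_deg_le s (M_from s (a # \<beta>)) a"
  unfolding var_deg_le_def
proof (intro allI impI)
  fix m
  assume "M_from s (a # \<beta>) m \<noteq> 0"
  then have m: "compress m = a # \<beta>" "Poly_Mapping.keys m \<subseteq> {s..}"
    by (auto simp: M_from_def split: if_splits)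
  then show "Poly_Mapping.lookup m s \<le> a"
    using compress_eq_Cons_first[of s m]
    by (cases "s \<in> Poly_Mapping.keys m") (auto simp: in_keys_iff)
qed

lemma slice_M_from_Cons:
  assumes "a > 0"
  shows "slice s a (M_from s (a # \<beta>)) = M_from (Suc s) \<beta>"
proof
  fix m
  show "slice s a (M_from s (a # \<beta>)) m = M_from (Suc s) \<beta> m"
  proof (cases "Poly_Mapping.lookup m s = 0")
    case True
    have keys: "Poly_Mapping.keys (m + Poly_Mapping.single s a) = insert s (Poly_Mapping.keys m)"
      using keys_single_add[OF assms] by (simp add: add.commute)
    show ?thesis
    proof (cases "Poly_Mapping.keys m \<subseteq> {Suc s..}")
      case True
      then have "\<forall>i\<in>Poly_Mapping.keys m. s < i"
        by auto
      then have "compress (m + Poly_Mapping.single s a) = a # compress m"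
        using compress_single_add[OF _ assms] by (simp add: add.commute)
      with True keys show ?thesis
        by (auto simp: slice_def M_from_def \<open>Poly_Mapping.lookup m s = 0\<close>)
    next
      case False
      then have "\<not> Poly_Mapping.keys (m + Poly_Mapping.single s a) \<subseteq> {s..}"
        using \<open>Poly_Mapping.lookup m s = 0\<close> keys by (auto simp: in_keys_iff not_less_eq_eq)
      with False show ?thesis
        by (simp add: slice_def M_from_def \<open>Poly_Mapping.lookup m s = 0\<close>)
    qed
  next
    case False
    then have "s \<in> Poly_Mapping.keys m"
      by (simp add: in_keys_iff)
    with False show ?thesis
      by (auto simp: slice_def M_from_def)
  qed
qed

definition compress_monoms :: "nat set \<Rightarrow> nat list \<Rightarrow> monom set" where
  "compress_monoms W \<beta> = {m. Poly_Mapping.keys m \<subseteq> W \<and> compress m = \<beta>}"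

text \<open>\<open>M_eval v j L \<beta>\<close> is \<open>M\<^sub>\<beta>(v\<^sub>j, \<dots>, v\<^sub>j\<^sub>+\<^sub>L\<^sub>-\<^sub>1)\<close>.\<close>

definition M_eval :: "(nat \<Rightarrow> 'a::comm_ring_1) \<Rightarrow> nat \<Rightarrow> nat \<Rightarrow> nat list \<Rightarrow> 'a" where
  "M_eval v j L \<beta> = (\<Sum>m\<in>compress_monoms {j..<j + L} \<beta>. mono_eval {j..<j + L} v m)"

lemma finite_compress_monoms: "finite W \<Longrightarrow> finite (compress_monoms W \<beta>)"
  by (rule finite_subset[OF _ finite_monoms_on[of W "sum_list \<beta>"]])
     (auto simp: compress_monoms_def monoms_on_def mdeg_eq_sum_list_compress)

lemma eval_vars_M_from: "eval_vars {j..<j + L} v (M_from j \<beta>) = M_eval v j L \<beta>"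
proof -
  have support: "{m. Poly_Mapping.keys m \<subseteq> {j..<j + L} \<and> M_from j \<beta> m \<noteq> 0} =
                 compress_monoms {j..<j + L} \<beta>"
    by (auto simp: M_from_def compress_monoms_def)
  show ?thesis
    unfolding eval_vars_def M_eval_def support
    by (intro sum.cong refl) (auto simp: M_from_def compress_monoms_def)
qed

lemma M_eval_Nil: "M_eval v j L [] = 1"
proof -
  have "compress_monoms {j..<j + L} [] = {0}"
    by (auto simp: compress_monoms_def compress_eq_Nil_iff)
  then show ?thesis
    by (simp add: M_eval_def mono_eval_def)
qed

lemma M_eval_0_Cons: "M_eval v j 0 (b # \<beta>) = 0"
proof -
  have "compress_monoms {j..<j} (b # \<beta>) = {}"
    by (auto simp: compress_monoms_def compress_eq_Nil_iff)
  then show ?thesis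
    by (simp add: M_eval_def)
qed

lemma single_add_in_compress_monoms:
  assumes "b > 0" "m \<in> compress_monoms {Suc j..<Suc j + L} \<beta>"
  shows "Poly_Mapping.single j b + m \<in> compress_monoms {j..<j + Suc L} (b # \<beta>)"
proof -
  have "\<forall>i\<in>Poly_Mapping.keys m. j < i"
    using assms(2) by (auto simp: compress_monoms_def)
  then have "compress (Poly_Mapping.single j b + m) = b # \<beta>"
    using assms compress_single_add by (simp add: compress_monoms_def)
  moreover have "Poly_Mapping.keys (Poly_Mapping.single j b + m) \<subseteq> {j..<j + Suc L}"
    using assms keys_single_add by (auto simp: compress_monoms_def)
  ultimately show ?thesis
    by (simp add: compress_monoms_def)
qed

lemma compress_monoms_Cons:
  assumes "b > 0"
  shows "compress_monoms {j..<j + Suc L} (b # \<beta>) =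
           compress_monoms {Suc j..<Suc j + L} (b # \<beta>) \<union>
           (\<lambda>m. Poly_Mapping.single j b + m) ` compress_monoms {Suc j..<Suc j + L} \<beta>"
    (is "?A = ?C \<union> ?B")
proof (intro equalityI subsetI)
  fix m
  assume m: "m \<in> ?A"
  show "m \<in> ?C \<union> ?B"
  proof (cases "j \<in> Poly_Mapping.keys m")
    case True
    let ?m' = "m - Poly_Mapping.single j (Poly_Mapping.lookup m j)"
    have "compress m = Poly_Mapping.lookup m j # compress ?m'"
      using m True by (intro compress_eq_Cons_first) (auto simp: compress_monoms_def)
    moreover have "compress m = b # \<beta>"
      using m by (simp add: compress_monoms_def)
    ultimately have "Poly_Mapping.lookup m j = b" "compress ?m' = \<beta>"
      by (metis list.inject)+
    moreover have "Poly_Mapping.keys ?m' \<subseteq> {Suc j..<Suc j + L}"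
      using m unfolding compress_monoms_def keys_diff_single_lookup by auto
    ultimately have "m = Poly_Mapping.single j b + ?m'"
          "?m' \<in> compress_monoms {Suc j..<Suc j + L} \<beta>"
      using single_lookup_add_diff[of j m] by (simp_all add: compress_monoms_def)
    then show ?thesis
      by blast
  next
    case False
    have "Poly_Mapping.keys m \<subseteq> {Suc j..<Suc j + L}"
    proof
      fix i
      assume "i \<in> Poly_Mapping.keys m"
      with m False have "j \<le> i" "i \<noteq> j" "i < Suc j + L"
        by (auto simp: compress_monoms_def)
      then show "i \<in> {Suc j..<Suc j + L}"
        by simp
    qed
    with m show ?thesis
      by (simp add: compress_monoms_def)
  qed
next
  fix m
  assume "m \<in> ?C \<union> ?B"
  then show "m \<in> ?A"
  proof
    assume "m \<in> ?C"
    then show ?thesis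
      by (auto simp: compress_monoms_def)
  next
    assume "m \<in> ?B"
    then show ?thesis
      using single_add_in_compress_monoms[OF assms] by blast
  qed
qed

lemma M_eval_Cons:
  assumes "b > 0"
  shows "M_eval v j (Suc L) (b # \<beta>) = v j ^ b * M_eval v (Suc j) L \<beta> + M_eval v (Suc j) L (b # \<beta>)"
proof -
  define W where "W = {Suc j..<Suc j + L}"
  have window: "{j..<j + Suc L} = insert j W" "j \<notin> W" "finite W"
    by (auto simp: W_def)
  let ?sh = "\<lambda>m. Poly_Mapping.single j b + m"
  have j_free: "Poly_Mapping.lookup m j = 0" if "m \<in> compress_monoms W \<gamma>" for m \<gamma>
    using that window(2) by (auto simp: compress_monoms_def in_keys_iff)
  have "M_eval v j (Suc L) (b # \<beta>) =
        (\<Sum>m\<in>compress_monoms {j..<j + Suc L} (b # \<beta>). mono_eval (insert j W) v m)"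
    by (simp only: M_eval_def window(1))
  also have "\<dots> = (\<Sum>m\<in>compress_monoms W (b # \<beta>). mono_eval (insert j W) v m) +
                   (\<Sum>m\<in>?sh ` compress_monoms W \<beta>. mono_eval (insert j W) v m)"
    unfolding compress_monoms_Cons[OF assms] W_def[symmetric]
    by (rule sum.union_disjoint)
       (use window keys_single_add[OF assms] finite_compress_monoms[OF window(3)]
         in \<open>auto simp: compress_monoms_def\<close>)
  also have "(\<Sum>m\<in>compress_monoms W (b # \<beta>). mono_eval (insert j W) v m)
        = M_eval v (Suc j) L (b # \<beta>)"
    unfolding M_eval_def W_def[symmetric]
    by (intro sum.cong refl) (simp add: mono_eval_insert_zero window j_free)
  also have "(\<Sum>m\<in>?sh ` compress_monoms W \<beta>. mono_eval (insert j W) v m) =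
             (\<Sum>m\<in>compress_monoms W \<beta>. mono_eval (insert j W) v (?sh m))"
    by (simp add: sum.reindex inj_on_def)
  also have "\<dots> = v j ^ b * M_eval v (Suc j) L \<beta>"
    unfolding M_eval_def W_def[symmetric] sum_distrib_left
    by (intro sum.cong refl)
        (simp add: mono_eval_add mono_eval_single mono_eval_insert_zero window j_free)
  finally show ?thesis
    by simp
qed

lemma M_eval_ones:
  assumes "\<forall>i\<in>{j..<j + L}. v i = 1" "\<forall>x\<in>set \<beta>. 0 < x"
  shows "M_eval v j L \<beta> = of_nat (L choose length \<beta>)"
  using assms
proof (induction L arbitrary: j \<beta>)
  case 0
  then show ?case
    by (cases \<beta>) (simp_all add: M_eval_Nil M_eval_0_Cons)
next
  case (Suc L)
  show ?case
  proof (cases \<beta>)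
    case Nil
    then show ?thesis
      by (simp add: M_eval_Nil)
  next
    case (Cons b \<gamma>)
    have "\<forall>i\<in>{Suc j..<Suc j + L}. v i = 1" "v j = 1"
      using Suc.prems(1) by auto
    with Suc.prems(2) Suc.IH show ?thesis
      by (simp add: Cons M_eval_Cons)
  qed
qed

lemma M_eval_singleton_three:
  "a > 0 \<Longrightarrow> M_eval v j 3 [a] = v j ^ a + v (Suc j) ^ a + v (Suc (Suc j)) ^ a"
  by (simp add: numeral_3_eq_3 M_eval_Cons M_eval_Nil M_eval_0_Cons)

text \<open>The coefficient of \<open>v\<^sub>j\<^sup>a\<close> is \<open>M\<^sub>(\<^sub>b\<^sub>,\<^sub>\<gamma>\<^sub>)(v\<^sub>j\<^sub>+\<^sub>1, 1, \<dots>, 1) = v\<^sub>j\<^sub>+\<^sub>1\<^sup>b \<cdot> n + 1 = 0\<close>.\<close>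

lemma M_eval_Cons_Cons_const:
  assumes pos: "\<forall>x\<in>set (a # b # \<gamma>). 0 < x" and n: "n = Suc (length \<gamma>)"
    and ones: "\<forall>i\<in>{Suc (Suc j)..<Suc (Suc j) + n}. v i = 1"
    and root: "v (Suc j) ^ b * of_nat n = -1"
  shows "M_eval v j (Suc (Suc n)) (a # b # \<gamma>) = v (Suc j) ^ a"
proof -
  have "M_eval v (Suc (Suc j)) n \<gamma> = of_nat n"
    using M_eval_ones[OF ones, of \<gamma>] pos n by simp
  moreover have "M_eval v (Suc (Suc j)) n (b # \<gamma>) = 1"
    using M_eval_ones[OF ones, of "b # \<gamma>"] pos n by simp
  moreover have "M_eval v (Suc (Suc j)) n (a # b # \<gamma>) = 0"
    using M_eval_ones[OF ones, of "a # b # \<gamma>"] pos n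
    by (simp add: binomial_eq_0 del: binomial_Suc_Suc)
  ultimately have "M_eval v (Suc j) (Suc n) (b # \<gamma>) = 0"
    "M_eval v (Suc j) (Suc n) (a # b # \<gamma>) = v (Suc j) ^ a"
    using pos root by (simp_all add: M_eval_Cons)
  then show ?thesis
    using pos by (simp add: M_eval_Cons)
qed

lemma M_from_nonzero:
  assumes "\<forall>x\<in>set \<beta>. 0 < x"
  shows "M_from j \<beta> \<noteq> kzero"
proof
  assume "M_from j \<beta> = kzero"
  then have "eval_vars {j..<j + length \<beta>} (\<lambda>_. 1::int) (M_from j \<beta>) = 0"
    by simp
  moreover have "eval_vars {j..<j + length \<beta>} (\<lambda>_. 1::int) (M_from j \<beta>) = 1"
    using M_eval_ones[of j "length \<beta>" "\<lambda>_. 1" \<beta>] assms by (simp add: eval_vars_M_from)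
  ultimately show False
    by simp
qed

lemma eval_vars_factors_M_from:
  assumes "f \<in> K" "g \<in> K" "kmult f g = M_from j \<beta>"
  shows "eval_vars {j..<j + L} v f * eval_vars {j..<j + L} v g = M_eval v j L \<beta>"
  using eval_vars_kmult[OF finite_atLeastLessThan assms(1,2)] assms(3) eval_vars_M_from by metis

lemma top_slices_factor:
  assumes "a > 0" "\<forall>x\<in>set \<beta>. 0 < x" "f \<in> K" "g \<in> K" "kmult f g = M_from s (a # \<beta>)"
  obtains d e where "var_deg_le s f d" "var_deg_le s g e" "d + e = a"
    "kmult (slice s d f) (slice s e g) = M_from (Suc s) \<beta>"
proof -
  have "M_from s (a # \<beta>) \<noteq> kzero"
    using M_from_nonzero assms(1,2) by simp
  then have "f \<noteq> kzero" "g \<noteq> kzero"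
    using assms(5) by (metis kmult_kzero(1), metis kmult_kzero(2))
  obtain d where d: "var_deg_le s f d" "slice s d f \<noteq> kzero"
    by (rule exists_top_slice[OF assms(3) \<open>f \<noteq> kzero\<close>])
  obtain e where e: "var_deg_le s g e" "slice s e g \<noteq> kzero"
    by (rule exists_top_slice[OF assms(4) \<open>g \<noteq> kzero\<close>])
  have top: "slice s (d + e) (M_from s (a # \<beta>)) = kmult (slice s d f) (slice s e g)"
    using slice_kmult_top[OF d(1) e(1)] assms(5) by simp
  have "kmult (slice s d f) (slice s e g) \<noteq> kzero"
    by (rule kmult_no_zero_divisors[OF slice_in_K[OF assms(3)] slice_in_K[OF assms(4)] d(2) e(2)])
  then have "d + e \<le> a"
    using top slice_nonzero_imp_le[OF var_deg_le_M_from_Cons] by metis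
  moreover have "a \<le> d + e"
    using slice_nonzero_imp_le[OF var_deg_le_kmult[OF d(1) e(1)], of a] assms(5)
      slice_M_from_Cons[OF assms(1)] M_from_nonzero[OF assms(2)] by simp
  ultimately have "d + e = a"
    by simp
  with top show ?thesis
    using that d(1) e(1) slice_M_from_Cons[OF assms(1)] by simp
qed

section \<open>Specialisation to univariate complex polynomials\<close>

lemma poly_zero_at_0_if_mult_eq_monom:
  fixes p q :: "'a::idom poly"
  assumes pq: "p * q = monom 1 a" and p: "0 < degree p"
  shows "poly p 0 = 0"
proof -
  have nz: "p \<noteq> 0" "q \<noteq> 0"
    using pq by auto
  then have "degree p + degree q = a"
    using pq by (metis degree_monom_eq degree_mult_eq one_neq_zero)
  moreover have "order 0 (monom (1::'a) a) = a"
    using order_power_n_n[of 0 a] by (simp add: monom_altdef)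
  then have "order 0 p + order 0 q = a"
    using pq order_mult[of p q 0] nz by simp
  moreover have "order 0 q \<le> degree q"
    by (rule order_degree[OF nz(2)])
  ultimately have "order 0 p \<noteq> 0"
    using p by linarith
  then show ?thesis
    by (simp add: order_root)
qed

lemma degree_eq_0_if_mult_eq_const:
  fixes p q :: "'a::idom poly"
  assumes "p * q = [:c:]" "c \<noteq> 0"
  shows "degree p = 0"
proof -
  have "p \<noteq> 0" "q \<noteq> 0"
    using assms by auto
  then show ?thesis
    using assms(1) degree_mult_eq[of p q] by simp
qed

lemma rsquarefree_monom_plus_one:
  assumes "a > 0"
  shows "rsquarefree (monom (1::'a::field_char_0) a + 1)"
  unfolding rsquarefree_roots
proof (intro allI notI)
  fix z :: 'a
  assume z: "poly (monom 1 a + 1) z = 0 \<and> poly (pderiv (monom 1 a + 1)) z = 0"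
  then have "z \<noteq> 0"
    using assms by (auto simp: poly_monom power_0_left)
  moreover have "of_nat a * z ^ (a - 1) = 0"
    using z by (simp add: pderiv_add pderiv_monom poly_monom)
  ultimately show False
    using assms by simp
qed

lemma rsquarefree_no_common_root:
  assumes "rsquarefree (p * q)" "poly p z = 0" "poly q z = 0"
  shows False
proof -
  have nz: "p \<noteq> 0" "q \<noteq> 0"
    using assms(1) by (auto simp: rsquarefree_def)
  then have "order z p \<noteq> 0" "order z q \<noteq> 0"
    using assms(2,3) by (auto simp: order_root)
  then have "order z (p * q) \<ge> 2"
    using order_mult[of p q z] nz by simp
  moreover have "order z (p * q) = 0 \<or> order z (p * q) = 1"
    using assms(1) by (simp add: rsquarefree_def)
  ultimately show False
    by linarith
qed

lemma complex_nth_root_exists: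
  assumes "n > 0"
  obtains z :: complex where "z ^ n = c"
proof (cases "c = 0")
  case True
  then show ?thesis
    using that[of 0] assms by simp
next
  case False
  then have "card {z::complex. z ^ n = c} > 0"
    using card_nth_roots assms by simp
  then show ?thesis
    using that card_gt_0_iff by fastforce
qed

lemma mono_eval_specialize_one_var:
  assumes "finite V" "s \<in> V" "v s = monom 1 1" "\<forall>i\<in>V - {s}. v i = [:c i:]"
  shows "mono_eval V v m = monom (\<Prod>i\<in>V - {s}. c i ^ Poly_Mapping.lookup m i)
      (Poly_Mapping.lookup m s)"
proof -
  have "mono_eval V v m = monom 1 (Poly_Mapping.lookup m s)
        * (\<Prod>i\<in>V - {s}. [:c i ^ Poly_Mapping.lookup m i:])"
    using assms by (simp add: mono_eval_def prod.remove monom_power poly_const_pow)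
  also have "(\<Prod>i\<in>V - {s}. [:c i ^ Poly_Mapping.lookup m i:])
        = [:\<Prod>i\<in>V - {s}. c i ^ Poly_Mapping.lookup m i:]"
    by (induction rule: infinite_finite_induct) auto
  finally show ?thesis
    by (simp add: monom_altdef)
qed

text \<open>Since the top slice is \<open>\<plusminus>1\<close>, the monomial \<open>x\<^sub>s\<^sup>d\<close> is the only one of \<open>x\<^sub>s\<close>-degree \<open>d\<close> in \<open>f\<close>,
  so it alone contributes to the coefficient of \<open>X\<^sup>d\<close>.\<close>

lemma coeff_eval_vars_top_slice:
  fixes c :: "nat \<Rightarrow> 'a::comm_ring_1"
  assumes V: "finite V" "s \<in> V" "v s = monom 1 1" "\<forall>i\<in>V - {s}. v i = [:c i:]"
    and "f \<in> K" and top: "pm_one (slice s d f)"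
  shows "coeff (eval_vars V v f) d \<in> {1, -1}"
proof -
  let ?\<mu> = "Poly_Mapping.single s d"
  obtain D where D: "deg_le f D"
    using \<open>f \<in> K\<close> K_iff_deg_le by blast
  have f\<mu>: "f ?\<mu> = 1 \<or> f ?\<mu> = -1"
    using pm_one_at_zero[OF top] by (simp add: slice_def)
  then have "mdeg ?\<mu> \<le> D"
    using D unfolding deg_le_def by (metis one_neq_zero neg_equal_0_iff_equal)
  then have \<mu>: "?\<mu> \<in> monoms_on V D"
    using V(2) by (simp add: monoms_on_def)
  have others: "f m = 0" if "Poly_Mapping.lookup m s = d" "m \<noteq> ?\<mu>" for m
  proof -
    have "?\<mu> + (m - ?\<mu>) = m"
      using single_lookup_add_diff[of s m] that(1) by simp
    with that(2) have "m - ?\<mu> \<noteq> 0"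
      by auto
    then have "slice s d f (m - ?\<mu>) = 0"
      by (rule pm_one_at_nonzero[OF top])
    then show ?thesis
      using slice_remove_var[of s m f] that(1) by simp
  qed
  have "coeff (eval_vars V v f) d = (\<Sum>m\<in>monoms_on V D. if m = ?\<mu> then of_int (f ?\<mu>) else 0)"
    unfolding eval_vars_eq_sum_monoms_on[OF V(1) D] coeff_sum mono_eval_specialize_one_var[OF V]
    by (intro sum.cong refl) (auto simp: of_int_poly coeff_monom_mult others lookup_single)
  also have "\<dots> = of_int (f ?\<mu>)"
    using \<mu> finite_monoms_on[OF V(1)] by simp
  finally show ?thesis
    using f\<mu> by auto
qed

lemma no_factorization_Cons_Cons_with_top_slice_pm_one:
  assumes fg: "f \<in> K" "g \<in> K" "kmult f g = M_from s (a # b # \<gamma>)"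
    and pos: "\<forall>x\<in>set (a # b # \<gamma>). 0 < x" and top: "pm_one (slice s d f)" "0 < d"
  shows False
proof -
  define n where "n = Suc (length \<gamma>)"
  obtain \<tau> :: complex where \<tau>: "\<tau> ^ b = - 1 / of_nat n"
    using complex_nth_root_exists[of b "- 1 / of_nat n"] pos by auto
  define c where "c i = (if i = Suc s then \<tau> else 1)" for i
  define v where "v i = (if i = s then monom 1 1 else [:c i:])" for i
  define V where "V = {s..<s + Suc (Suc n)}"
  have n0: "(of_nat n :: complex) \<noteq> 0"
    unfolding n_def by (rule of_nat_neq_0)
  then have "v (Suc s) ^ b * of_nat n = -1"
    using \<tau> by (simp add: v_def c_def poly_const_pow of_nat_poly flip: pCons_one)
  moreover have "\<forall>i\<in>{Suc (Suc s)..<Suc (Suc s) + n}. v i = 1"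
    by (simp add: v_def c_def pCons_one)
  ultimately have "M_eval v s (Suc (Suc n)) (a # b # \<gamma>) = v (Suc s) ^ a"
    by (intro M_eval_Cons_Cons_const[OF pos n_def])
  then have "eval_vars V v f * eval_vars V v g = [:\<tau> ^ a:]"
    using eval_vars_factors_M_from[OF fg, of "Suc (Suc n)" v]
    by (simp add: V_def v_def c_def poly_const_pow)
  moreover have "\<tau> \<noteq> 0"
    using \<tau> pos n0 by (auto simp: power_0_left)
  ultimately have "degree (eval_vars V v f) = 0"
    by (intro degree_eq_0_if_mult_eq_const[where c = "\<tau> ^ a"]) auto
  moreover have "coeff (eval_vars V v f) d \<in> {1, -1}"
    by (rule coeff_eval_vars_top_slice[of V s v c]) (auto simp: V_def v_def fg top)
  ultimately show False
    using \<open>0 < d\<close> by (auto simp: coeff_eq_0)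
qed

text \<open>The substitutions \<open>(X, \<omega>, 1)\<close> and \<open>(0, X, 1)\<close> for \<open>(x\<^sub>s, x\<^sub>s\<^sub>+\<^sub>1, x\<^sub>s\<^sub>+\<^sub>2)\<close>, with
  \<open>\<omega>\<^sup>a = -1\<close>, agree after evaluating \<open>X\<close> at \<open>0\<close> and at \<open>\<omega>\<close> respectively. The first turns
  \<open>M\<^sub>(\<^sub>a\<^sub>)\<close> into \<open>X\<^sup>a\<close>, so both factors vanish at \<open>0\<close>; the second turns it into the
  squarefree \<open>X\<^sup>a + 1\<close>, which would then have the double root \<open>\<omega>\<close>.\<close>

lemma no_factorization_singleton_with_top_slices_pm_one:
  assumes fg: "f \<in> K" "g \<in> K" "kmult f g = M_from s [a]" and "0 < a"
    and top: "pm_one (slice s d f)" "pm_one (slice s e g)" "0 < d" "0 < e"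
  shows False
proof -
  obtain \<omega> :: complex where \<omega>: "\<omega> ^ a = -1"
    using complex_nth_root_exists \<open>0 < a\<close> by metis
  define V where "V = {s..<s + 3}"
  define c where "c i = (if i = Suc s then \<omega> else 1)" for i
  define vX :: "nat \<Rightarrow> complex poly" where "vX i = (if i = s then monom 1 1 else [:c i:])" for i
  define vY :: "nat \<Rightarrow> complex poly"
    where "vY i = (if i = s then 0 else if i = Suc s then monom 1 1 else 1)" for i
  let ?pf = "eval_vars V vX f" and ?pg = "eval_vars V vX g"
  let ?qf = "eval_vars V vY f" and ?qg = "eval_vars V vY g"
  have "?pf * ?pg = monom 1 a"
    using eval_vars_factors_M_from[OF fg, of 3 vX] M_eval_singleton_three[OF \<open>0 < a\<close>, of vX s] \<omega>
    by (simp add: V_def vX_def c_def monom_power poly_const_pow flip: pCons_one)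
  moreover have "coeff ?pf d \<in> {1, -1}" "coeff ?pg e \<in> {1, -1}"
    by (rule coeff_eval_vars_top_slice[of V s vX c]; auto simp: V_def vX_def fg top)+
  then have "d \<le> degree ?pf" "e \<le> degree ?pg"
    by (auto intro: le_degree)
  then have "0 < degree ?pf" "0 < degree ?pg"
    using top(3,4) by auto
  ultimately have "poly ?pf 0 = 0" "poly ?pg 0 = 0"
    by (auto intro: poly_zero_at_0_if_mult_eq_monom simp: mult.commute)
  moreover have "(\<lambda>i. poly (vX i) 0) = (\<lambda>i. poly (vY i) \<omega>)"
    by (auto simp: vX_def vY_def c_def poly_monom)
  ultimately have "poly ?qf \<omega> = 0" "poly ?qg \<omega> = 0"
    by (simp_all add: poly_eval_vars)
  moreover have "?qf * ?qg = monom 1 a + 1"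
    using eval_vars_factors_M_from[OF fg, of 3 vY] M_eval_singleton_three[OF \<open>0 < a\<close>, of vY s]
    by (simp add: V_def vY_def monom_power power_0_left \<open>0 < a\<close>)
  ultimately show False
    using rsquarefree_no_common_root rsquarefree_monom_plus_one[OF \<open>0 < a\<close>] by metis
qed

lemma factor_pm_one_if_top_slice_pm_one:
  assumes fg: "f \<in> K" "g \<in> K" "kmult f g = M_from s (a # \<beta>)" and pos: "\<forall>x\<in>set (a # \<beta>). 0 < x"
    and deg: "var_deg_le s f d" "var_deg_le s g e" "d + e = a"
    and slices: "kmult (slice s d f) (slice s e g) = M_from (Suc s) \<beta>"
    and top: "pm_one (slice s d f)"
  shows "pm_one f \<or> pm_one g"
proof (cases "d = 0")
  case True
  then show ?thesis
    using slice_zero_eq deg(1) top by auto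
next
  case False
  show ?thesis
  proof (cases \<beta>)
    case Nil
    then have "kmult (slice s e g) (slice s d f) = kone"
      using slices by (simp add: M_from_Nil kmult_commute)
    then have "pm_one (slice s e g)"
      by (rule kmult_eq_kone_imp_pm_one[OF slice_in_K[OF fg(2)] slice_in_K[OF fg(1)]])
    moreover have "e = 0"
    proof (rule ccontr)
      assume "e \<noteq> 0"
      then show False
        using no_factorization_singleton_with_top_slices_pm_one[OF fg(1,2) _ _ top] Nil fg(3)
          pos False
          \<open>pm_one (slice s e g)\<close> by auto
    qed
    ultimately show ?thesis
      using slice_zero_eq deg(2) by auto
  next
    case (Cons b \<gamma>)
    then show ?thesis
      using no_factorization_Cons_Cons_with_top_slice_pm_one[OF fg(1,2) _ _ top] fg(3) pos False
        by auto
  qed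
qed

lemma factor_of_M_from_pm_one:
  assumes "\<forall>x\<in>set \<alpha>. 0 < x" "f \<in> K" "g \<in> K" "kmult f g = M_from s \<alpha>"
  shows "pm_one f \<or> pm_one g"
  using assms
proof (induction \<alpha> arbitrary: s f g)
  case Nil
  then show ?case
    using kmult_eq_kone_imp_pm_one M_from_Nil by metis
next
  case (Cons a \<beta>)
  obtain d e where de: "var_deg_le s f d" "var_deg_le s g e" "d + e = a"
    "kmult (slice s d f) (slice s e g) = M_from (Suc s) \<beta>"
    using top_slices_factor[of a \<beta> f g s] Cons.prems by auto
  have "pm_one (slice s d f) \<or> pm_one (slice s e g)"
    using Cons.IH[of "slice s d f" "slice s e g" "Suc s"] Cons.prems slice_in_K de(4) by auto
  then show ?case
  proof
    assume "pm_one (slice s d f)"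
    then show ?thesis
      using factor_pm_one_if_top_slice_pm_one[OF Cons.prems(2,3,4,1) de] by blast
  next
    assume "pm_one (slice s e g)"
    moreover have "kmult g f = M_from s (a # \<beta>)"
          "kmult (slice s e g) (slice s d f) = M_from (Suc s) \<beta>"
      using Cons.prems(4) de(4) by (simp_all add: kmult_commute)
    ultimately show ?thesis
      using factor_pm_one_if_top_slice_pm_one[OF Cons.prems(3,2) _ Cons.prems(1) de(2,1)]
        de(3) by auto
  qed
qed

lemma irreducible_in_if_factors_pm_one:
  assumes "R \<subseteq> K" "p \<in> R" "p \<noteq> kzero" "\<not> pm_one p"
    and "\<And>a b. a \<in> K \<Longrightarrow> b \<in> K \<Longrightarrow> p = kmult a b \<Longrightarrow> pm_one a \<or> pm_one b"
  shows "irreducible_in R p"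
proof -
  have "\<not> unit_in R p"
    using assms(1,4) unit_in_K_imp_pm_one by (auto simp: unit_in_def)
  moreover have "unit_in R a \<or> unit_in R b" if "a \<in> R" "b \<in> R" "p = kmult a b" for a b
    using assms(1) assms(5)[of a b] that pm_one_imp_unit_in by blast
  ultimately show ?thesis
    using assms(2,3) by (auto simp: irreducible_in_def)
qed

theorem proposition8p10:
  assumes "is_composition \<alpha>"
  shows "irreducible_in QSym (M \<alpha>) \<and> irreducible_in K (M \<alpha>)"
proof -
  have pos: "\<forall>x\<in>set \<alpha>. 0 < x" and "\<alpha> \<noteq> []"
    using assms by (auto simp: is_composition_def)
  have "QSym \<subseteq> K"
    by (auto simp: QSym_def)
  moreover have "M \<alpha> \<in> QSym"
    using M_from_in_K[of 0 \<alpha>] unfolding QSym_def M_eq_M_from_0[symmetric]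
    by (simp add: monomialQ_def)
  moreover have "M \<alpha> \<noteq> kzero"
    using M_from_nonzero[OF pos] by (simp add: M_eq_M_from_0)
  moreover have "\<not> pm_one (M \<alpha>)"
    using pm_one_at_zero \<open>\<alpha> \<noteq> []\<close> by (force simp: monomialQ_def)
  moreover have "pm_one a \<or> pm_one b" if "a \<in> K" "b \<in> K" "M \<alpha> = kmult a b" for a b
    using factor_of_M_from_pm_one[OF pos that(1,2), of 0] that(3)[symmetric]
    by (simp add: M_eq_M_from_0)
  ultimately show ?thesis
    using irreducible_in_if_factors_pm_one by blast
qed

end
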